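(* Let $G$ be a graph on an $n$-element vertex set such that every $3$-subset of the vertices contains an edge of $G$. Then there exist a labeling of the vertex set by $[n]$ and a combinatorial shifting $G^c$ of (the edge set of) $G$ such that $G^c\supseteq B(n)=\{\{a,b\}:1\le a<b\le n,\ a+b\le n\}$.
   Context: For $i<j$, the operation $\mathrm{sh}_{ij}$ on a family $\mathcal F$ of $k$-subsets of $[n]$ replaces each $F\in\mathcal F$ with $j\in F$, $i\notin F$ and $(F\setminus\{j\})\cup\{i\}\notin\mathcal F$ by $(F\setminus\{j\})\cup\{i\}$, and leaves the other members unchanged. A family is shifted if for every $F$ in it and $i<j$ with $j\in F$, $i\notin F$, also $(F\setminus\{j\})\cup\{i\}$ is in it. A combinatorial shifting of $\mathcal F$ is any family obtained from $\mathcal F$ by applying a finite sequence of operations $\mathrm{sh}_{ij}$ ($i<j$) until a shifted family is reached. *)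

theory Defs
  imports Main
begin

definition sh :: "nat \<Rightarrow> nat \<Rightarrow> nat set set \<Rightarrow> nat set set" where
  "sh i j \<F> =
     (\<lambda>F. if j \<in> F \<and> i \<notin> F \<and> insert i (F - {j}) \<notin> \<F>
          then insert i (F - {j}) else F) ` \<F>"

definition shifted :: "nat \<Rightarrow> nat set set \<Rightarrow> bool" where
  "shifted n \<F> \<longleftrightarrow>
     (\<forall>F\<in>\<F>. \<forall>i\<in>{1..n}. \<forall>j\<in>{1..n}. i < j \<and> j \<in> F \<and> i \<notin> F \<longrightarrow> insert i (F - {j}) \<in> \<F>)"

definition sh_step :: "nat \<Rightarrow> nat set set \<Rightarrow> nat set set \<Rightarrow> bool" where
  "sh_step n \<F> \<G> \<longleftrightarrow> (\<exists>i j. 1 \<le> i \<and> i < j \<and> j \<le> n \<and> \<G> = sh i j \<F>)"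

definition comb_shifting :: "nat \<Rightarrow> nat set set \<Rightarrow> nat set set \<Rightarrow> bool" where
  "comb_shifting n \<F> \<H> \<longleftrightarrow> (sh_step n)\<^sup>*\<^sup>* \<F> \<H> \<and> shifted n \<H>"

definition B :: "nat \<Rightarrow> nat set set" where
  "B n = {{a, b} | a b. 1 \<le> a \<and> a < b \<and> b \<le> n \<and> a + b \<le> n}"

end

theory Submission imports Defs begin

text \<open>
  Label the vertices from the outside in: choose a non-adjacent pair \<open>u, w\<close> (any pair if the
  graph is complete), label them \<open>1\<close> and \<open>n\<close> and recurse on the rest. Since every triple
  spans an edge, each vertex \<open>x\<close> labelled between a nested pair \<open>(k, n + 1 - k)\<close> is adjacent to
  one of its two ends. Now apply \<open>sh\<^sub>k\<^sub>,\<^sub>n\<^sub>+\<^sub>1\<^sub>-\<^sub>k\<close> for \<open>k = 1, \<dots>, \<lfloor>n/2\<rfloor>\<close>: this step turns each edge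
  \<open>{x, n + 1 - k}\<close> into \<open>{k, x}\<close>, so afterwards all pairs \<open>{a, b}\<close> with \<open>a \<le> k\<close> and
  \<open>a + b \<le> n\<close> are present. Hence the family contains \<open>B n\<close>. Finally, shift arbitrarily until
  the family is shifted; this terminates because the total label sum drops with every
  effective shift, and it never destroys \<open>B n\<close> because \<open>B n\<close> is itself shifted.
\<close>

definition nest_cover :: "'a set set \<Rightarrow> 'a set \<Rightarrow> ('a \<Rightarrow> nat) \<Rightarrow> nat \<Rightarrow> bool" where
  "nest_cover E V f n \<longleftrightarrow>
     (\<forall>u\<in>V. \<forall>w\<in>V. \<forall>x\<in>V. f u + f w = n + 1 \<and> f u < f x \<and> f x < f w \<longrightarrow> {u, x} \<in> E \<or> {x, w} \<in> E)"

lemma exists_pair_dominating: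
  assumes "u \<in> V" "w \<in> V" "u \<noteq> w"
    and triples: "\<forall>T. T \<subseteq> V \<and> card T = 3 \<longrightarrow> (\<exists>e\<in>E. e \<subseteq> T)"
    and edges: "\<forall>e\<in>E. card e = 2"
  shows "\<exists>u\<in>V. \<exists>w\<in>V. u \<noteq> w \<and> (\<forall>x\<in>V - {u, w}. {u, x} \<in> E \<or> {x, w} \<in> E)"
proof (cases "\<exists>u\<in>V. \<exists>w\<in>V. u \<noteq> w \<and> {u, w} \<notin> E")
  case True
  then obtain u w where uw: "u \<in> V" "w \<in> V" "u \<noteq> w" "{u, w} \<notin> E" by blast
  have "{u, x} \<in> E \<or> {x, w} \<in> E" if x: "x \<in> V - {u, w}" for x
  proof -
    have "card {u, w, x} = 3" using uw x by auto
    then obtain e where e: "e \<in> E" "e \<subseteq> {u, w, x}"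
      using triples uw x by (metis Diff_iff empty_subsetI insert_subset)
    have ce: "card e = 2" using edges e by auto
    have "x \<in> e"
    proof (rule ccontr)
      assume "x \<notin> e"
      then have "e \<subseteq> {u, w}" using e by auto
      then have "e = {u, w}" using ce uw by (metis card_2_iff card_subset_eq finite.emptyI finite.insertI)
      then show False using uw e by auto
    qed
    then obtain y where "e = {x, y}" using ce by (metis card_2_iff insert_commute insert_iff singleton_iff)
    then have "y = u \<or> y = w" using e ce by (auto simp: card_insert_if split: if_splits)
    then show ?thesis using \<open>e = {x, y}\<close> e by (auto simp: insert_commute)
  qed
  then show ?thesis using uw by blast
next
  case False
  then show ?thesis using assms(1-3) by blast
qed

lemma bij_betw_nest_extend:
  fixes f :: "'a \<Rightarrow> nat"
  assumes "bij_betw f V {1..m}" "u \<notin> V" "w \<notin> V" "u \<noteq> w"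
  shows "bij_betw (\<lambda>v. if v = u then 1 else if v = w then m + 2 else f v + 1)
           (insert u (insert w V)) {1..m + 2}"
    (is "bij_betw ?g _ _")
proof -
  have "bij_betw Suc {1..m} {2..m + 1}"
    by (simp add: bij_betw_def image_Suc_atLeastAtMost)
  then have "bij_betw (Suc \<circ> f) V {2..m + 1}" by (rule bij_betw_trans[OF assms(1)])
  then have "bij_betw ?g V {2..m + 1}"
    by (rule bij_betw_cong[THEN iffD1, rotated]) (use assms(2,3) in auto)
  moreover have "bij_betw ?g {u, w} {1, m + 2}" using assms(4) by (auto simp: bij_betw_def)
  ultimately have "bij_betw ?g ({u, w} \<union> V) ({1, m + 2} \<union> {2..m + 1})"
    by (intro bij_betw_combine) auto
  moreover have "{1, m + 2} \<union> {2..m + 1} = {1..m + 2}" by auto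
  ultimately show ?thesis by simp
qed

lemma nest_cover_extend:
  assumes f: "bij_betw f V {1..m}" "nest_cover E V f m"
    and uw: "u \<notin> V" "w \<notin> V" "u \<noteq> w"
    and dominating: "\<forall>x\<in>V. {u, x} \<in> E \<or> {x, w} \<in> E"
  shows "nest_cover E (insert u (insert w V))
           (\<lambda>v. if v = u then 1 else if v = w then m + 2 else f v + 1) (m + 2)"
    (is "nest_cover E ?V ?g _")
  unfolding nest_cover_def
proof (intro ballI impI)
  fix u' w' x assume mem: "u' \<in> ?V" "w' \<in> ?V" "x \<in> ?V"
    and nested: "?g u' + ?g w' = m + 2 + 1 \<and> ?g u' < ?g x \<and> ?g x < ?g w'"
  have g_V: "?g v = f v + 1" "1 \<le> f v" "f v \<le> m" if "v \<in> V" for v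
    using that uw f(1) bij_betwE by fastforce+
  have inner: "v \<in> V" if "v \<in> ?V" "1 < ?g v" "?g v < m + 2" for v
    using that by (auto split: if_splits)
  show "{u', x} \<in> E \<or> {x, w'} \<in> E"
  proof (cases "u' = u")
    case True
    then have "?g w' = m + 2" using nested by simp
    moreover have "w' \<notin> V" using g_V(1,3)[of w'] \<open>?g w' = m + 2\<close> by auto
    ultimately have "w' = w" using mem(2) by auto
    moreover have "x \<in> V" using inner[OF mem(3)] nested True \<open>?g w' = m + 2\<close> by simp
    ultimately show ?thesis using dominating True by auto
  next
    case False
    then have "1 < ?g u'" using mem(1) g_V[of u'] by (auto split: if_splits)
    moreover have "?g w' < m + 2" using nested \<open>1 < ?g u'\<close> by linarith
    ultimately have "u' \<in> V" "w' \<in> V" "x \<in> V" using inner mem nested by (meson less_trans)+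
    moreover have "f u' + f w' = m + 1 \<and> f u' < f x \<and> f x < f w'"
      using nested calculation g_V by auto
    ultimately show ?thesis using f(2) unfolding nest_cover_def by blast
  qed
qed

lemma exists_nest_cover_labelling:
  assumes "finite V" "card V = n" "\<forall>e\<in>E. card e = 2"
    and "\<forall>T. T \<subseteq> V \<and> card T = 3 \<longrightarrow> (\<exists>e\<in>E. e \<subseteq> T)"
  shows "\<exists>f. bij_betw f V {1..n} \<and> nest_cover E V f n"
  using assms
proof (induction n arbitrary: V rule: less_induct)
  case (less n)
  show ?case
  proof (cases "n < 2")
    case True
    obtain f where f: "bij_betw f V {1..n}"
      using less.prems(1,2) ex_bij_betw_nat_finite_1 bij_betw_inv by metis
    then have "nest_cover E V f n"
      using True unfolding nest_cover_def by (auto dest!: bij_betwE)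
    then show ?thesis using f by blast
  next
    case False
    then obtain m where n: "n = m + 2" by (metis add.commute le_Suc_ex not_less)
    then obtain u0 w0 where "u0 \<in> V" "w0 \<in> V" "u0 \<noteq> w0"
      using less.prems(1,2) card_le_Suc0_iff_eq[OF less.prems(1)] by fastforce
    then obtain u w where uw: "u \<in> V" "w \<in> V" "u \<noteq> w"
      and dominating: "\<forall>x\<in>V - {u, w}. {u, x} \<in> E \<or> {x, w} \<in> E"
      using exists_pair_dominating[OF _ _ _ less.prems(4,3)] by metis
    have "card (V - {u, w}) = m" using uw less.prems(1,2) n by (simp add: card_Diff_subset)
    moreover have "\<forall>T. T \<subseteq> V - {u, w} \<and> card T = 3 \<longrightarrow> (\<exists>e\<in>E. e \<subseteq> T)"
      using less.prems(4) by blast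
    ultimately obtain f where "bij_betw f (V - {u, w}) {1..m}" "nest_cover E (V - {u, w}) f m"
      using less.IH[of m "V - {u, w}"] less.prems(1,3) n by auto
    moreover have "V = insert u (insert w (V - {u, w}))" using uw by auto
    ultimately show ?thesis
      using bij_betw_nest_extend[of f "V - {u, w}" m u w] nest_cover_extend[of f "V - {u, w}" m E u w]
        uw dominating n by auto
  qed
qed

lemma nest_cover_image:
  assumes "bij_betw f V {1..n}" "nest_cover E V f n"
  shows "nest_cover ((\<lambda>e. f ` e) ` E) {1..n} id n"
  unfolding nest_cover_def
proof (intro ballI impI)
  fix k w x assume "k \<in> {1..n}" "w \<in> {1..n}" "x \<in> {1..n}"
    and nested: "id k + id w = n + 1 \<and> id k < id x \<and> id x < id w"
  moreover have "f ` V = {1..n}" using assms(1) by (simp add: bij_betw_def)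
  ultimately obtain k' w' x' where "k' \<in> V" "w' \<in> V" "x' \<in> V" "k = f k'" "w = f w'" "x = f x'"
    by (metis imageE)
  moreover from this have "{k', x'} \<in> E \<or> {x', w'} \<in> E"
    using assms(2) nested unfolding nest_cover_def by auto
  moreover have "{k, x} = f ` {k', x'}" "{x, w} = f ` {x', w'}" using calculation by simp_all
  ultimately show "{k, x} \<in> (\<lambda>e. f ` e) ` E \<or> {x, w} \<in> (\<lambda>e. f ` e) ` E" by blast
qed

definition shift_map :: "nat \<Rightarrow> nat \<Rightarrow> nat set set \<Rightarrow> nat set \<Rightarrow> nat set" where
  "shift_map i j \<F> F =
     (if j \<in> F \<and> i \<notin> F \<and> insert i (F - {j}) \<notin> \<F> then insert i (F - {j}) else F)"

lemma sh_eq_image_shift_map: "sh i j \<F> = shift_map i j \<F> ` \<F>"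
  unfolding sh_def shift_map_def ..

lemma sh_keep: "F \<in> \<F> \<Longrightarrow> j \<notin> F \<or> i \<in> F \<or> insert i (F - {j}) \<in> \<F> \<Longrightarrow> F \<in> sh i j \<F>"
  unfolding sh_eq_image_shift_map shift_map_def by (rule image_eqI[of _ _ F]) auto

lemma sh_shifted_member:
  "F \<in> \<F> \<Longrightarrow> j \<in> F \<Longrightarrow> i \<notin> F \<Longrightarrow> insert i (F - {j}) \<in> sh i j \<F>"
  using sh_keep[of "insert i (F - {j})" \<F> j i]
  unfolding sh_eq_image_shift_map shift_map_def by (cases "insert i (F - {j}) \<in> \<F>") auto

lemma finite_sh: "finite \<F> \<Longrightarrow> \<forall>F\<in>\<F>. finite F \<Longrightarrow> finite (sh i j \<F>) \<and> (\<forall>F\<in>sh i j \<F>. finite F)"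
  unfolding sh_def by auto

lemma inj_on_shift_map: "inj_on (shift_map i j \<F>) \<F>"
proof
  fix F G assume FG: "F \<in> \<F>" "G \<in> \<F>" "shift_map i j \<F> F = shift_map i j \<F> G"
  have moved_eq: "F = G" if "j \<in> F" "i \<notin> F" "j \<in> G" "i \<notin> G" "insert i (F - {j}) = insert i (G - {j})"
  proof -
    have "F - {j} = G - {j}" using that by (metis Diff_insert_absorb Diff_iff)
    then show ?thesis using that by (metis insert_Diff)
  qed
  show "F = G"
    using FG moved_eq unfolding shift_map_def by (auto split: if_splits)
qed

lemma sum_shift_less:
  assumes "finite F" "j \<in> F" "i \<notin> F" "(i::nat) < j"
  shows "\<Sum>(insert i (F - {j})) < \<Sum>F"
  using assms by (simp add: sum.remove)

definition weight :: "nat set set \<Rightarrow> nat" where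
  "weight \<F> = (\<Sum>F\<in>\<F>. \<Sum>F)"

lemma weight_sh_less:
  assumes fin: "finite \<F>" "\<forall>F\<in>\<F>. finite F" and "i < j"
    and moved: "F0 \<in> \<F>" "j \<in> F0" "i \<notin> F0" "insert i (F0 - {j}) \<notin> \<F>"
  shows "weight (sh i j \<F>) < weight \<F>"
proof -
  have "weight (sh i j \<F>) = (\<Sum>F\<in>\<F>. \<Sum>(shift_map i j \<F> F))"
    unfolding weight_def sh_eq_image_shift_map by (simp add: sum.reindex[OF inj_on_shift_map])
  also have "\<dots> < (\<Sum>F\<in>\<F>. \<Sum>F)"
  proof (rule sum_strict_mono_ex1[OF fin(1)])
    show "\<forall>F\<in>\<F>. \<Sum>(shift_map i j \<F> F) \<le> \<Sum>F"
      using sum_shift_less fin \<open>i < j\<close> unfolding shift_map_def by (auto simp: less_imp_le)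
    show "\<exists>F\<in>\<F>. \<Sum>(shift_map i j \<F> F) < \<Sum>F"
      using sum_shift_less fin \<open>i < j\<close> moved unfolding shift_map_def by (intro bexI[of _ F0]) auto
  qed
  finally show ?thesis unfolding weight_def .
qed

lemma shifted_subset_sh:
  assumes "shifted n \<A>" "\<A> \<subseteq> \<F>" "i \<in> {1..n}" "j \<in> {1..n}" "i < j"
  shows "\<A> \<subseteq> sh i j \<F>"
proof
  fix F assume "F \<in> \<A>"
  then have "j \<notin> F \<or> i \<in> F \<or> insert i (F - {j}) \<in> \<F>"
    using assms unfolding shifted_def by blast
  then show "F \<in> sh i j \<F>" using \<open>F \<in> \<A>\<close> assms(2) by (blast intro: sh_keep)
qed

lemma exists_shifted_above:
  assumes "finite \<F>" "\<forall>F\<in>\<F>. finite F" "shifted n \<A>" "\<A> \<subseteq> \<F>"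
  shows "\<exists>\<H>. (sh_step n)\<^sup>*\<^sup>* \<F> \<H> \<and> shifted n \<H> \<and> \<A> \<subseteq> \<H>"
  using assms
proof (induction "weight \<F>" arbitrary: \<F> rule: less_induct)
  case less
  show ?case
  proof (cases "shifted n \<F>")
    case True
    then show ?thesis using less.prems by blast
  next
    case False
    then obtain F i j where F: "F \<in> \<F>" "i \<in> {1..n}" "j \<in> {1..n}" "i < j" "j \<in> F" "i \<notin> F"
       "insert i (F - {j}) \<notin> \<F>" unfolding shifted_def by blast
    have "weight (sh i j \<F>) < weight \<F>"
      using weight_sh_less[OF less.prems(1,2) F(4) F(1) F(5-7)] .
    then obtain \<H> where "(sh_step n)\<^sup>*\<^sup>* (sh i j \<F>) \<H>" "shifted n \<H>" "\<A> \<subseteq> \<H>"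
      using less.hyps finite_sh less.prems shifted_subset_sh F by meson
    moreover have "sh_step n \<F> (sh i j \<F>)" unfolding sh_step_def using F by auto
    ultimately show ?thesis by (meson converse_rtranclp_into_rtranclp)
  qed
qed

lemma finite_sh_steps:
  "(sh_step n)\<^sup>*\<^sup>* \<F> \<G> \<Longrightarrow> finite \<F> \<and> (\<forall>F\<in>\<F>. finite F) \<Longrightarrow> finite \<G> \<and> (\<forall>G\<in>\<G>. finite G)"
  by (induction rule: rtranclp_induct) (auto simp: sh_step_def dest: finite_sh)

lemma exists_comb_shifting_above:
  assumes "(sh_step n)\<^sup>*\<^sup>* \<F> \<G>" "finite \<F>" "\<forall>F\<in>\<F>. finite F" "shifted n \<A>" "\<A> \<subseteq> \<G>"
  shows "\<exists>\<H>. comb_shifting n \<F> \<H> \<and> \<A> \<subseteq> \<H>"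
proof -
  have "finite \<G> \<and> (\<forall>G\<in>\<G>. finite G)" using finite_sh_steps[OF assms(1)] assms(2,3) by simp
  then obtain \<H> where "(sh_step n)\<^sup>*\<^sup>* \<G> \<H>" "shifted n \<H>" "\<A> \<subseteq> \<H>"
    using exists_shifted_above[of \<G> n \<A>] assms(4,5) by auto
  moreover from this(1) have "(sh_step n)\<^sup>*\<^sup>* \<F> \<H>" using assms(1) by (rule rtranclp_trans[rotated])
  ultimately show ?thesis unfolding comb_shifting_def by blast
qed

lemma pair_in_B: "1 \<le> a \<Longrightarrow> a < b \<Longrightarrow> a + b \<le> n \<Longrightarrow> {a, b} \<in> B n"
  unfolding B_def by (intro CollectI exI[of _ a] exI[of _ b]) auto

lemma shifted_B: "shifted n (B n)"
  unfolding shifted_def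
proof (intro ballI impI)
  fix F i j assume F: "F \<in> B n" and ij: "i \<in> {1..n}" "j \<in> {1..n}" "i < j \<and> j \<in> F \<and> i \<notin> F"
  then obtain a b where ab: "F = {a, b}" "1 \<le> a" "a < b" "a + b \<le> n"
    unfolding B_def by auto
  consider "j = a" | "j = b" "i < a" | "j = b" "a < i" using ij ab by fastforce
  then show "insert i (F - {j}) \<in> B n"
  proof cases
    case 1
    then have "insert i (F - {j}) = {i, b}" using ab by auto
    then show ?thesis using pair_in_B[of i b n] ab ij 1 by simp
  next
    case 2
    then have "insert i (F - {j}) = {i, a}" using ab by auto
    then show ?thesis using pair_in_B[of i a n] ab ij 2 by simp
  next
    case 3
    then have "insert i (F - {j}) = {a, i}" using ab by auto
    then show ?thesis using pair_in_B[of a i n] ab ij 3 by simp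
  qed
qed

fun nest_shifts :: "nat \<Rightarrow> nat set set \<Rightarrow> nat \<Rightarrow> nat set set" where
  "nest_shifts n \<G> 0 = \<G>"
| "nest_shifts n \<G> (Suc k) = sh (Suc k) (n - k) (nest_shifts n \<G> k)"

lemma nest_shifts_steps: "2 * k \<le> n \<Longrightarrow> (sh_step n)\<^sup>*\<^sup>* \<G> (nest_shifts n \<G> k)"
proof (induction k)
  case (Suc k)
  have "sh_step n (nest_shifts n \<G> k) (nest_shifts n \<G> (Suc k))"
    unfolding sh_step_def using Suc.prems by (intro exI[of _ "Suc k"] exI[of _ "n - k"]) auto
  then show ?case using Suc by (simp add: rtranclp.rtrancl_into_rtrancl)
qed simp

lemma nest_shifts_keep_inner: "F \<in> \<G> \<Longrightarrow> F \<subseteq> {k + 1..n - k} \<Longrightarrow> F \<in> nest_shifts n \<G> k"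
proof (induction k)
  case (Suc k)
  have "{Suc k + 1..n - Suc k} \<subseteq> {k + 1..n - k}" by auto
  then have "F \<subseteq> {k + 1..n - k}" using Suc.prems(2) by blast
  moreover have "n - k \<notin> F" using Suc.prems(2) by fastforce
  ultimately show ?case using Suc by (simp add: sh_keep)
qed simp

lemma nest_cover_idD:
  assumes "nest_cover \<G> {1..n} id n" "1 \<le> k" "k < x" "x + k \<le> n"
  shows "{k, x} \<in> \<G> \<or> {x, n + 1 - k} \<in> \<G>"
  using assms unfolding nest_cover_def
  by (elim ballE[of _ _ k] ballE[of _ _ "n + 1 - k"] ballE[of _ _ x]) auto

lemma nest_shifts_low_pairs:
  assumes cover: "nest_cover \<G> {1..n} id n"
  shows "2 * k \<le> n \<Longrightarrow> 1 \<le> a \<Longrightarrow> a \<le> k \<Longrightarrow> a < b \<Longrightarrow> a + b \<le> n \<Longrightarrow> {a, b} \<in> nest_shifts n \<G> k"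
proof (induction k arbitrary: a b)
  case (Suc k)
  show ?case
  proof (cases "a \<le> k")
    case True
    then have old: "{a, b} \<in> nest_shifts n \<G> k" using Suc.IH Suc.prems by simp
    show ?thesis
    proof (cases "b = n - k")
      case False
      then show ?thesis unfolding nest_shifts.simps using old True Suc.prems by (intro sh_keep) auto
    next
      case True
      \<comment> \<open>the pair \<open>{a, b}\<close> survives since its shift \<open>{a, Suc k}\<close> is already present\<close>
      have "{a, Suc k} \<in> nest_shifts n \<G> k" using Suc.IH Suc.prems \<open>a \<le> k\<close> by simp
      moreover have "insert (Suc k) ({a, b} - {n - k}) = {a, Suc k}" using True Suc.prems by auto
      ultimately show ?thesis using old by (simp add: sh_keep)
    qed
  next
    case False
    then have a: "a = Suc k" using Suc.prems by auto
    have "{a, b} \<in> \<G> \<or> {b, n + 1 - a} \<in> \<G>"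
      using nest_cover_idD[OF cover] Suc.prems by simp
    then show ?thesis
    proof
      assume "{a, b} \<in> \<G>"
      moreover have "{a, b} \<subseteq> {k + 1..n - k}" using Suc.prems a by auto
      ultimately have "{a, b} \<in> nest_shifts n \<G> k" by (rule nest_shifts_keep_inner)
      then show ?thesis using a by (simp add: sh_keep)
    next
      assume "{b, n + 1 - a} \<in> \<G>"
      moreover have "{b, n + 1 - a} \<subseteq> {k + 1..n - k}" using Suc.prems a by auto
      ultimately have "{b, n - k} \<in> nest_shifts n \<G> k" using a by (metis nest_shifts_keep_inner diff_Suc_Suc plus_1_eq_Suc add.commute)
      then have "insert (Suc k) ({b, n - k} - {n - k}) \<in> nest_shifts n \<G> (Suc k)"
        using Suc.prems a by (simp add: sh_shifted_member)
      moreover have "insert (Suc k) ({b, n - k} - {n - k}) = {a, b}" using Suc.prems a by auto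
      ultimately show ?thesis by simp
    qed
  qed
qed simp

lemma B_subset_nest_shifts:
  assumes "nest_cover \<G> {1..n} id n"
  shows "B n \<subseteq> nest_shifts n \<G> (n div 2)"
proof
  fix F assume "F \<in> B n"
  then obtain a b where "F = {a, b}" "1 \<le> a" "a < b" "a + b \<le> n" unfolding B_def by auto
  moreover from this have "a \<le> n div 2" by linarith
  ultimately show "F \<in> nest_shifts n \<G> (n div 2)" using nest_shifts_low_pairs[OF assms] by auto
qed

theorem mainTheorem6:
  fixes V :: "'a set" and E :: "'a set set" and n :: nat
  assumes "finite V" and "card V = n"
    and "\<forall>e\<in>E. e \<subseteq> V \<and> card e = 2"
    and "\<forall>T. T \<subseteq> V \<and> card T = 3 \<longrightarrow> (\<exists>e\<in>E. e \<subseteq> T)"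
  shows "\<exists>f Gc. bij_betw f V {1..n} \<and> comb_shifting n ((\<lambda>e. f ` e) ` E) Gc \<and> B n \<subseteq> Gc"
proof -
  have edges: "\<forall>e\<in>E. card e = 2" "\<forall>e\<in>E. finite e"
    using assms(3) by (auto intro: card_ge_0_finite)
  obtain f where f: "bij_betw f V {1..n}" "nest_cover E V f n"
    using exists_nest_cover_labelling[OF assms(1,2) edges(1) assms(4)] by blast
  define \<G> where "\<G> = (\<lambda>e. f ` e) ` E"
  have "finite E" using assms(1,3) by (meson Pow_iff finite_Pow_iff rev_finite_subset subsetI)
  then have fin: "finite \<G>" "\<forall>G\<in>\<G>. finite G" unfolding \<G>_def using edges(2) by auto
  have cover: "nest_cover \<G> {1..n} id n" unfolding \<G>_def using nest_cover_image f .
  have "(sh_step n)\<^sup>*\<^sup>* \<G> (nest_shifts n \<G> (n div 2))" by (rule nest_shifts_steps) simp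
  moreover have "B n \<subseteq> nest_shifts n \<G> (n div 2)" using B_subset_nest_shifts[OF cover] .
  ultimately obtain Gc where "comb_shifting n \<G> Gc" "B n \<subseteq> Gc"
    using exists_comb_shifting_above[OF _ fin shifted_B] by blast
  then show ?thesis using f(1) unfolding \<G>_def by blast
qed

end
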